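(* A continuous function $f:[0,1]\to\mathbb{R}$ is of bounded variation if and only if $f=g+h$ for some continuous functions $g,h:[0,1]\to\mathbb{R}$ whose graphs are $1$-monotone.
   Context: A metric space $(X,d)$ is $c$-monotone ($c>0$) if there is a linear order $<$ on $X$ such that $d(x,y)\le c\,d(x,z)$ whenever $x<y<z$ in $X$. The graph of $g$ is $\{(x,g(x)):x\in[0,1]\}\subseteq\mathbb{R}^2$ with the Euclidean metric. *)

theory Defs
  imports "HOL-Analysis.Analysis"
begin

definition c_monotone :: "real \<Rightarrow> 'a::metric_space set \<Rightarrow> bool" where
  "c_monotone c S \<longleftrightarrow> c > 0 \<and> (\<exists>R. linear_order_on S R \<and>
     (\<forall>x\<in>S. \<forall>y\<in>S. \<forall>z\<in>S. (x,y) \<in> R \<and> x \<noteq> y \<and> (y,z) \<in> R \<and> y \<noteq> z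
        \<longrightarrow> dist x y \<le> c * dist x z))"

text \<open>Graph of g over [0,1], as a subset of the Euclidean plane (real \<times> real carries
the Euclidean metric).\<close>
definition graph01 :: "(real \<Rightarrow> real) \<Rightarrow> (real \<times> real) set" where
  "graph01 g = (\<lambda>x. (x, g x)) ` {0..1}"

definition bounded_variation01 :: "(real \<Rightarrow> real) \<Rightarrow> bool" where
  "bounded_variation01 f \<longleftrightarrow> (\<exists>M. \<forall>(n::nat) (t::nat \<Rightarrow> real).
     t 0 = 0 \<and> t n = 1 \<and> (\<forall>i<n. t i \<le> t (Suc i)) \<longrightarrow>
     (\<Sum>i<n. \<bar>f (t (Suc i)) - f (t i)\<bar>) \<le> M)"

end

theory Submission
  imports Defs
begin

(*
  Jordan's decomposition writes a continuous f of bounded variation as (V + f)/2 + (f - V)/2,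
  V being the variation of f on [0,x]; both summands are continuous and monotone, and the graph
  of a monotone function is 1-monotone for the left-to-right order.

  Conversely, a 1-monotone order on the graph of a continuous g is, by connectedness of [0,1],
  the left-to-right order or its reverse; reflecting g we may assume the former.  Then no point
  of the graph comes closer to an earlier point by moving further along, so a vertical step
  exceeding the horizontal one raises the running maximum of x + y, or of x - y, by at least half
  the step.  These running maxima are bounded, which bounds the variation of g.
*)

lemma lift_Suc_mono_le_bounded:
  fixes x :: "nat \<Rightarrow> 'a::order"
  assumes "\<And>i. i < n \<Longrightarrow> x i \<le> x (Suc i)" "k \<le> i" "i \<le> n"
  shows "x k \<le> x i"
  by (rule lift_Suc_mono_le_ivl[where N = "{..<n}"]) (use assms in auto)

lemma dist_Pair_le_dist_Pair_iff:
  fixes a b c d e f :: real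
  shows "dist (a, b) (c, d) \<le> dist (a, b) (e, f) \<longleftrightarrow> (c - a)^2 + (d - b)^2 \<le> (e - a)^2 + (f - b)^2"
  by (simp add: dist_Pair_Pair dist_real_def power2_commute)

definition running_max :: "(nat \<Rightarrow> real) \<Rightarrow> nat \<Rightarrow> real" where
  "running_max z i = Max (z ` {..i})"

lemma running_max_ge: "k \<le> i \<Longrightarrow> z k \<le> running_max z i"
  unfolding running_max_def by (intro Max_ge) auto

lemma running_max_attained: obtains k where "k \<le> i" "running_max z i = z k"
proof -
  have "running_max z i \<in> z ` {..i}"
    unfolding running_max_def by (intro Max_in) auto
  then show ?thesis using that by auto
qed

lemma running_max_Suc_ge: "running_max z i \<le> running_max z (Suc i)"
  unfolding running_max_def by (rule Max_mono) auto

lemma running_max_0 [simp]: "running_max z 0 = z 0"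
  by (simp add: running_max_def)

lemma rise_le_of_dist_nondecreasing:
  fixes xk yk xi yi xj yj :: real
  assumes "xi \<le> xj" "xj - xi < yj - yi" "xk \<le> xj"
    and "dist (xk, yk) (xi, yi) \<le> dist (xk, yk) (xj, yj)"
  shows "yj - yi \<le> 2 * ((xj + yj) - (xk + yk))"
proof -
  define a b dx dy where "a = xj - xk" and "b = yj - yk" and "dx = xj - xi" and "dy = yj - yi"
  have "dx\<^sup>2 + dy\<^sup>2 \<le> 2 * (a * dx + b * dy)"
  proof -
    have "(a - dx)\<^sup>2 + (b - dy)\<^sup>2 \<le> a\<^sup>2 + b\<^sup>2"
      using assms(4) unfolding dist_Pair_le_dist_Pair_iff a_def b_def dx_def dy_def
      by (simp add: algebra_simps)
    then show ?thesis
      by (simp add: power2_eq_square algebra_simps)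
  qed
  have "a * dx \<le> a * dy"
    using assms unfolding a_def dx_def dy_def by (intro mult_left_mono) auto
  have "dy * dy \<le> dx\<^sup>2 + dy\<^sup>2"
    by (simp add: power2_eq_square)
  also have "\<dots> \<le> 2 * (a * dx + b * dy)" by fact
  also have "\<dots> \<le> dy * (2 * (a + b))"
    using \<open>a * dx \<le> a * dy\<close> by (simp add: algebra_simps)
  finally have "dy \<le> 2 * (a + b)"
    using assms(1,2) unfolding dx_def dy_def by simp
  then show ?thesis
    unfolding a_def b_def dy_def by simp
qed

lemma rise_le_running_max_increase:
  fixes x y :: "nat \<Rightarrow> real"
  assumes x_mono: "\<And>i. i < n \<Longrightarrow> x i \<le> x (Suc i)"
    and dist_mono: "\<And>k i. k \<le> i \<Longrightarrow> i < n \<Longrightarrow>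
      dist (x k, y k) (x i, y i) \<le> dist (x k, y k) (x (Suc i), y (Suc i))"
    and "i < n" "x (Suc i) - x i < y (Suc i) - y i"
  shows "y (Suc i) - y i \<le> 2 * (running_max (\<lambda>j. x j + y j) (Suc i) - running_max (\<lambda>j. x j + y j) i)"
proof -
  obtain k where k: "k \<le> i" "running_max (\<lambda>j. x j + y j) i = x k + y k"
    by (rule running_max_attained)
  have "x k \<le> x (Suc i)"
    using x_mono by (rule lift_Suc_mono_le_bounded) (use k(1) assms(3) in auto)
  then have "y (Suc i) - y i \<le> 2 * ((x (Suc i) + y (Suc i)) - (x k + y k))"
    using rise_le_of_dist_nondecreasing[OF x_mono[OF assms(3)] assms(4)] dist_mono[OF k(1) assms(3)]
    by blast
  also have "\<dots> \<le> 2 * (running_max (\<lambda>j. x j + y j) (Suc i) - running_max (\<lambda>j. x j + y j) i)"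
    using k(2) running_max_ge[of "Suc i" "Suc i" "\<lambda>j. x j + y j"] by simp
  finally show ?thesis .
qed

lemma abs_step_le_running_max_increase:
  fixes x y :: "nat \<Rightarrow> real"
  assumes x_mono: "\<And>i. i < n \<Longrightarrow> x i \<le> x (Suc i)"
    and dist_mono: "\<And>k i. k \<le> i \<Longrightarrow> i < n \<Longrightarrow>
      dist (x k, y k) (x i, y i) \<le> dist (x k, y k) (x (Suc i), y (Suc i))"
    and "i < n"
  shows "\<bar>y (Suc i) - y i\<bar> \<le> (x (Suc i) - x i)
    + 2 * (running_max (\<lambda>j. x j + y j) (Suc i) - running_max (\<lambda>j. x j + y j) i)
    + 2 * (running_max (\<lambda>j. x j - y j) (Suc i) - running_max (\<lambda>j. x j - y j) i)"
proof -
  have dist_mono_neg: "dist (x k, - y k) (x i, - y i) \<le> dist (x k, - y k) (x (Suc i), - y (Suc i))"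
    if "k \<le> i" "i < n" for k i
    using dist_mono[OF that] by (simp add: dist_Pair_Pair dist_minus)
  have mono: "running_max (\<lambda>j. x j + y j) i \<le> running_max (\<lambda>j. x j + y j) (Suc i)"
    "running_max (\<lambda>j. x j - y j) i \<le> running_max (\<lambda>j. x j - y j) (Suc i)"
    by (rule running_max_Suc_ge)+
  consider (flat) "\<bar>y (Suc i) - y i\<bar> \<le> x (Suc i) - x i"
    | (up) "x (Suc i) - x i < y (Suc i) - y i" | (down) "x (Suc i) - x i < y i - y (Suc i)"
    by linarith
  then show ?thesis
  proof cases
    case flat
    with mono show ?thesis by argo
  next
    case up
    have "y (Suc i) - y i \<le> 2 * (running_max (\<lambda>j. x j + y j) (Suc i) - running_max (\<lambda>j. x j + y j) i)"
      using x_mono dist_mono assms(3) up by (rule rise_le_running_max_increase)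
    with mono up x_mono[OF assms(3)] show ?thesis by argo
  next
    case down
    then have "x (Suc i) - x i < - y (Suc i) - - y i"
      by simp
    with x_mono dist_mono_neg assms(3)
    have "- y (Suc i) - - y i \<le> 2 * (running_max (\<lambda>j. x j + - y j) (Suc i) - running_max (\<lambda>j. x j + - y j) i)"
      by (rule rise_le_running_max_increase)
    with mono down x_mono[OF assms(3)] show ?thesis by simp
  qed
qed

lemma sum_abs_diff_le_of_dist_nondecreasing:
  fixes x y :: "nat \<Rightarrow> real"
  assumes x_mono: "\<And>i. i < n \<Longrightarrow> x i \<le> x (Suc i)"
    and dist_mono: "\<And>k i. k \<le> i \<Longrightarrow> i < n \<Longrightarrow>
      dist (x k, y k) (x i, y i) \<le> dist (x k, y k) (x (Suc i), y (Suc i))"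
    and bounded: "\<And>i. i \<le> n \<Longrightarrow> \<bar>y i\<bar> \<le> B"
  shows "(\<Sum>i<n. \<bar>y (Suc i) - y i\<bar>) \<le> 5 * (x n - x 0) + 8 * B"
proof -
  define Hp where "Hp = running_max (\<lambda>j. x j + y j)"
  define Hm where "Hm = running_max (\<lambda>j. x j - y j)"
  have "(\<Sum>i<n. \<bar>y (Suc i) - y i\<bar>)
      \<le> (\<Sum>i<n. (x (Suc i) + 2 * Hp (Suc i) + 2 * Hm (Suc i)) - (x i + 2 * Hp i + 2 * Hm i))"
  proof (rule sum_mono)
    fix i assume "i \<in> {..<n}"
    with x_mono dist_mono have "\<bar>y (Suc i) - y i\<bar> \<le> (x (Suc i) - x i)
      + 2 * (Hp (Suc i) - Hp i) + 2 * (Hm (Suc i) - Hm i)"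
      unfolding Hp_def Hm_def by (intro abs_step_le_running_max_increase) auto
    then show "\<bar>y (Suc i) - y i\<bar> \<le> (x (Suc i) + 2 * Hp (Suc i) + 2 * Hm (Suc i)) - (x i + 2 * Hp i + 2 * Hm i)"
      by simp
  qed
  also have "\<dots> = (x n - x 0) + 2 * (Hp n - Hp 0) + 2 * (Hm n - Hm 0)"
    by (subst sum_lessThan_telescope) simp
  also have "\<dots> \<le> 5 * (x n - x 0) + 8 * B"
  proof -
    obtain k where k: "k \<le> n" "Hp n = x k + y k"
      unfolding Hp_def by (rule running_max_attained)
    obtain j where j: "j \<le> n" "Hm n = x j - y j"
      unfolding Hm_def by (rule running_max_attained)
    have "x k \<le> x n" "x j \<le> x n"
      using lift_Suc_mono_le_bounded[where x = x and n = n, OF x_mono] k j by auto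
    moreover have "\<bar>y k\<bar> \<le> B" "\<bar>y j\<bar> \<le> B" "\<bar>y 0\<bar> \<le> B"
      using bounded k j by auto
    moreover have "Hp 0 = x 0 + y 0" "Hm 0 = x 0 - y 0"
      unfolding Hp_def Hm_def by simp_all
    ultimately show ?thesis
      using k j by argo
  qed
  finally show ?thesis .
qed

text \<open>A \<open>c\<close>-monotone order on the arc \<open>G ` {0..1}\<close>, pulled back to the parameter interval:
  \<open>P s t\<close> says that \<open>G s\<close> precedes \<open>G t\<close>.\<close>

locale monotone_arc_order =
  fixes G :: "real \<Rightarrow> 'a::metric_space" and P :: "real \<Rightarrow> real \<Rightarrow> bool" and c :: real
  assumes continuous: "continuous_on {0..1} G"
    and injective: "inj_on G {0..1}"
    and c_pos: "c > 0"
    and total: "\<And>s t. s \<in> {0..1} \<Longrightarrow> t \<in> {0..1} \<Longrightarrow> s \<noteq> t \<Longrightarrow> P s t \<longleftrightarrow> \<not> P t s"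
    and monotone: "\<And>r s u. r \<in> {0..1} \<Longrightarrow> s \<in> {0..1} \<Longrightarrow> u \<in> {0..1} \<Longrightarrow> r \<noteq> s \<Longrightarrow> s \<noteq> u
      \<Longrightarrow> P r s \<Longrightarrow> P s u \<Longrightarrow> dist (G r) (G s) \<le> c * dist (G r) (G u)"
begin

lemma eventually_near:
  assumes "s \<in> {0..1}" "t \<in> {0..1}" "s \<noteq> t"
  shows "\<forall>\<^sub>F u in at s within {0..1}. u \<in> {0..1} \<and> u \<noteq> t \<and> dist (G u) (G s) < dist (G s) (G t) / (1 + c)"
proof -
  have "G s \<noteq> G t"
    using injective assms by (auto simp: inj_on_def)
  then have "dist (G s) (G t) / (1 + c) > 0"
    using c_pos by simp
  then have "\<forall>\<^sub>F u in at s within {0..1}. dist (G u) (G s) < dist (G s) (G t) / (1 + c)"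
    using continuous assms(1) by (intro tendstoD) (auto simp: continuous_on_def)
  moreover have "\<forall>\<^sub>F u in at s within {0..1}. u \<in> {0..1}"
    by (simp add: eventually_at_filter)
  ultimately show ?thesis
    using eventually_neq_at_within[of t s "{0..1}"] by eventually_elim auto
qed

lemma precedes_stable_left:
  assumes st: "s \<in> {0..1}" "t \<in> {0..1}" "s \<noteq> t" "P s t"
  shows "\<forall>\<^sub>F u in at s within {0..1}. P u t"
  using eventually_near[OF st(1-3)]
proof eventually_elim
  case (elim u)
  show "P u t"
  proof (rule ccontr)
    assume "\<not> P u t"
    then have "P t u" using total st elim by blast
    then have "dist (G s) (G t) \<le> c * dist (G s) (G u)"
      using monotone st elim by auto
    also have "\<dots> < dist (G s) (G t)"
      using elim c_pos by (simp add: dist_commute field_simps)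
        (use zero_le_dist[of "G s" "G u"] in linarith)
    finally show False by simp
  qed
qed

lemma precedes_stable_right:
  assumes st: "s \<in> {0..1}" "t \<in> {0..1}" "s \<noteq> t" "P s t"
  shows "\<forall>\<^sub>F u in at t within {0..1}. P s u"
  using eventually_near[OF st(2,1) st(3)[symmetric]]
proof eventually_elim
  case (elim u)
  show "P s u"
  proof (rule ccontr)
    assume "\<not> P s u"
    then have "P u s" using total st elim by blast
    then have "dist (G u) (G s) \<le> c * dist (G u) (G t)"
      using monotone st elim by auto
    moreover have "dist (G s) (G t) \<le> dist (G u) (G s) + dist (G u) (G t)"
      by (metis dist_commute dist_triangle)
    ultimately show False
      using elim c_pos by (simp add: dist_commute field_simps)
  qed
qed

lemma precedes_constant_on_connected:
  assumes "t \<in> {0..1}" "connected A" "A \<subseteq> {0..1} - {t}" "s \<in> A" "u \<in> A"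
  shows "P s t = P u t"
  using assms(2,4,5)
proof (rule connected_local_const, intro ballI)
  fix a assume "a \<in> A"
  then have a: "a \<in> {0..1}" "a \<noteq> t" using assms(3) by auto
  have "\<forall>\<^sub>F b in at a within {0..1}. P a t = P b t"
  proof (cases "P a t")
    case True
    show ?thesis
      using precedes_stable_left[OF a(1) assms(1) a(2) True] by eventually_elim (simp add: True)
  next
    case False
    then have "P t a" using total a assms(1) by blast
    with a assms(1) have "\<forall>\<^sub>F u in at a within {0..1}. P t u"
      by (intro precedes_stable_right) auto
    with eventually_near[OF a(1) assms(1) a(2)] show ?thesis
      by eventually_elim (use False total assms(1) in blast)
  qed
  then show "\<forall>\<^sub>F b in at a within A. P a t = P b t"
    by (rule filter_leD[OF at_le, rotated]) (use assms(3) in auto)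
qed

theorem natural_or_reverse:
  "(\<forall>s t. 0 \<le> s \<longrightarrow> s < t \<longrightarrow> t \<le> 1 \<longrightarrow> P s t) \<or> (\<forall>s t. 0 \<le> s \<longrightarrow> s < t \<longrightarrow> t \<le> 1 \<longrightarrow> P t s)"
proof -
  have from_0: "P 1 0 = P t 0" if "0 < t" "t \<le> 1" for t
    by (rule precedes_constant_on_connected[of 0 "{0<..1}"]) (use that in auto)
  have to_t: "P 0 t = P s t" if "0 \<le> s" "s < t" "t \<le> 1" for s t
    by (rule precedes_constant_on_connected[of t "{0..<t}"]) (use that in auto)
  show ?thesis
  proof (cases "P 0 1")
    case True
    have "P s t" if "0 \<le> s" "s < t" "t \<le> 1" for s t
      using from_0[of t] to_t[OF that] True total[of 0 1] total[of 0 t] that by auto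
    then show ?thesis by blast
  next
    case False
    have "P t s" if "0 \<le> s" "s < t" "t \<le> 1" for s t
      using from_0[of t] to_t[OF that] False total[of 0 1] total[of 0 t] total[of s t] that by auto
    then show ?thesis by blast
  qed
qed

end

definition is_partition :: "real \<Rightarrow> real \<Rightarrow> (nat \<Rightarrow> real) \<Rightarrow> nat \<Rightarrow> bool" where
  "is_partition a b t n \<longleftrightarrow> t 0 = a \<and> t n = b \<and> (\<forall>i<n. t i \<le> t (Suc i))"

definition partition_sum :: "(real \<Rightarrow> real) \<Rightarrow> (nat \<Rightarrow> real) \<Rightarrow> nat \<Rightarrow> real" where
  "partition_sum f t n = (\<Sum>i<n. \<bar>f (t (Suc i)) - f (t i)\<bar>)"

text \<open>The supremum is junk unless the partition sums are bounded above, so the lemmas about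
  \<open>variation\<close> assume \<open>bounded_variation01 f\<close>.\<close>

definition variation :: "(real \<Rightarrow> real) \<Rightarrow> real \<Rightarrow> real \<Rightarrow> real" where
  "variation f a b = Sup {partition_sum f t n | t n. is_partition a b t n}"

lemma bounded_variation01_iff:
  "bounded_variation01 f \<longleftrightarrow> (\<exists>M. \<forall>t n. is_partition 0 1 t n \<longrightarrow> partition_sum f t n \<le> M)"
  unfolding bounded_variation01_def is_partition_def partition_sum_def by (intro ex_cong1) auto

lemma is_partition_le:
  assumes "is_partition a b t n" "k \<le> i" "i \<le> n"
  shows "t k \<le> t i"
  using lift_Suc_mono_le_bounded[of n t k i] assms by (simp add: is_partition_def)

lemma is_partition_mem:
  assumes "is_partition a b t n" "i \<le> n"
  shows "t i \<in> {a..b}"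
  using is_partition_le[OF assms(1), of 0 i] is_partition_le[OF assms(1), of i n] assms
  by (auto simp: is_partition_def)

lemma is_partition_single: "a \<le> b \<Longrightarrow> is_partition a b (\<lambda>i. if i = 0 then a else b) 1"
  by (simp add: is_partition_def)

lemma partition_sum_single: "partition_sum f (\<lambda>i. if i = 0 then a else b) 1 = \<bar>f b - f a\<bar>"
  by (simp add: partition_sum_def)

definition partition_append :: "(nat \<Rightarrow> real) \<Rightarrow> nat \<Rightarrow> (nat \<Rightarrow> real) \<Rightarrow> nat \<Rightarrow> real" where
  "partition_append t n s = (\<lambda>i. if i \<le> n then t i else s (i - n))"

lemma is_partition_append:
  assumes "is_partition a b t n" "is_partition b c s m"
  shows "is_partition a c (partition_append t n s) (n + m)"
  unfolding is_partition_def
proof (intro conjI allI impI)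
  fix i assume "i < n + m"
  then show "partition_append t n s i \<le> partition_append t n s (Suc i)"
    using assms by (cases "i < n") (auto simp: is_partition_def partition_append_def Suc_diff_le)
qed (use assms in \<open>auto simp: is_partition_def partition_append_def\<close>)

lemma partition_sum_append:
  assumes "is_partition a b t n" "is_partition b c s m"
  shows "partition_sum f (partition_append t n s) (n + m) = partition_sum f t n + partition_sum f s m"
proof -
  let ?u = "partition_append t n s"
  have "partition_sum f ?u (n + m) = (\<Sum>i<n. \<bar>f (?u (Suc i)) - f (?u i)\<bar>) + (\<Sum>i<m. \<bar>f (?u (Suc (n + i))) - f (?u (n + i))\<bar>)"
    unfolding partition_sum_def by (induction m) (simp_all add: add.assoc)
  also have "(\<Sum>i<n. \<bar>f (?u (Suc i)) - f (?u i)\<bar>) = partition_sum f t n"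
    unfolding partition_sum_def partition_append_def by (intro sum.cong) auto
  also have "(\<Sum>i<m. \<bar>f (?u (Suc (n + i))) - f (?u (n + i))\<bar>) = partition_sum f s m"
    using assms unfolding partition_sum_def partition_append_def is_partition_def
    by (intro sum.cong) (auto simp: Suc_diff_le)
  finally show ?thesis .
qed

lemma is_partition_min:
  "is_partition a c t n \<Longrightarrow> a \<le> b \<Longrightarrow> b \<le> c \<Longrightarrow> is_partition a b (\<lambda>i. min b (t i)) n"
  by (auto simp: is_partition_def)

lemma is_partition_max:
  "is_partition a c t n \<Longrightarrow> a \<le> b \<Longrightarrow> b \<le> c \<Longrightarrow> is_partition b c (\<lambda>i. max b (t i)) n"
  by (auto simp: is_partition_def)

lemma partition_sum_le_split:
  assumes "is_partition a c t n"
  shows "partition_sum f t n \<le> partition_sum f (\<lambda>i. min b (t i)) n + partition_sum f (\<lambda>i. max b (t i)) n"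
  unfolding partition_sum_def sum.distrib[symmetric]
proof (rule sum_mono)
  fix i assume "i \<in> {..<n}"
  have "t i \<le> t (Suc i)" using \<open>i \<in> {..<n}\<close> assms by (simp add: is_partition_def)
  moreover have "\<bar>f (t (Suc i)) - f (t i)\<bar> \<le> \<bar>f b - f (t i)\<bar> + \<bar>f (t (Suc i)) - f b\<bar>"
    by argo
  ultimately show "\<bar>f (t (Suc i)) - f (t i)\<bar>
      \<le> \<bar>f (min b (t (Suc i))) - f (min b (t i))\<bar> + \<bar>f (max b (t (Suc i))) - f (max b (t i))\<bar>"
    by (cases "t i \<le> b"; cases "t (Suc i) \<le> b") (simp_all add: min_def max_def)
qed

lemma partition_sum_le_perturb:
  assumes "\<And>i. i \<le> n \<Longrightarrow> \<bar>f (s i) - f (t i)\<bar> \<le> e"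
  shows "partition_sum f t n \<le> partition_sum f s n + 2 * n * e"
proof -
  have "partition_sum f t n \<le> (\<Sum>i<n. \<bar>f (s (Suc i)) - f (s i)\<bar> + 2 * e)"
    unfolding partition_sum_def
  proof (rule sum_mono)
    fix i assume "i \<in> {..<n}"
    then have "\<bar>f (s i) - f (t i)\<bar> \<le> e" "\<bar>f (s (Suc i)) - f (t (Suc i))\<bar> \<le> e"
      using assms by auto
    then show "\<bar>f (t (Suc i)) - f (t i)\<bar> \<le> \<bar>f (s (Suc i)) - f (s i)\<bar> + 2 * e"
      by argo
  qed
  then show ?thesis
    by (simp add: sum.distrib partition_sum_def)
qed

lemma partition_sum_le_near:
  assumes cont: "continuous_on {0..1} f" and t: "is_partition a b t n" "0 \<le> a" "b \<le> 1" and "e > 0"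
  obtains d where "d > 0"
    "\<And>s. (\<And>i. i \<le> n \<Longrightarrow> s i \<in> {0..1} \<and> \<bar>s i - t i\<bar> < d) \<Longrightarrow>
      partition_sum f t n \<le> partition_sum f s n + e"
proof -
  define \<eta> where "\<eta> = e / (2 * (n + 1))"
  have "\<eta> > 0" using \<open>e > 0\<close> by (simp add: \<eta>_def)
  obtain d where d: "d > 0" "\<And>x x'. x \<in> {0..1} \<Longrightarrow> x' \<in> {0..1} \<Longrightarrow> dist x' x < d \<Longrightarrow> dist (f x') (f x) < \<eta>"
    using uniformly_continuous_onE[OF compact_uniformly_continuous[OF cont compact_Icc] \<open>\<eta> > 0\<close>] by blast
  have "partition_sum f t n \<le> partition_sum f s n + e"
    if s: "\<And>i. i \<le> n \<Longrightarrow> s i \<in> {0..1} \<and> \<bar>s i - t i\<bar> < d" for s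
  proof -
    have "partition_sum f t n \<le> partition_sum f s n + 2 * real n * \<eta>"
    proof (rule partition_sum_le_perturb)
      fix i assume "i \<le> n"
      moreover have "t i \<in> {0..1}" using is_partition_mem[OF t(1) \<open>i \<le> n\<close>] t(2,3) by auto
      ultimately show "\<bar>f (s i) - f (t i)\<bar> \<le> \<eta>"
        using d(2)[of "t i" "s i"] s[of i] by (simp add: dist_real_def)
    qed
    also have "2 * real n * \<eta> \<le> e"
      using \<open>e > 0\<close> by (simp add: \<eta>_def field_simps)
    finally show ?thesis by simp
  qed
  with d(1) show ?thesis using that by blast
qed

lemma variation_least:
  assumes "a \<le> b" "\<And>t n. is_partition a b t n \<Longrightarrow> partition_sum f t n \<le> z"
  shows "variation f a b \<le> z"
  unfolding variation_def using assms is_partition_single[OF assms(1)]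
  by (intro cSup_least) auto

context
  fixes f :: "real \<Rightarrow> real"
  assumes bv: "bounded_variation01 f"
begin

lemma bdd_above_partition_sums:
  assumes "0 \<le> a" "b \<le> 1"
  shows "bdd_above {partition_sum f t n | t n. is_partition a b t n}"
proof -
  obtain M where M: "\<And>t n. is_partition 0 1 t n \<Longrightarrow> partition_sum f t n \<le> M"
    using bv unfolding bounded_variation01_iff by blast
  have "partition_sum f t n \<le> M" if t: "is_partition a b t n" for t n
  proof -
    note left = is_partition_single[OF assms(1)] and right = is_partition_single[OF assms(2)]
    let ?u = "partition_append (\<lambda>i. if i = 0 then 0 else a) 1 t"
    have u: "is_partition 0 b ?u (1 + n)"
      by (rule is_partition_append[OF left t])
    have "partition_sum f t n \<le> partition_sum f (partition_append ?u (1 + n) (\<lambda>i. if i = 0 then b else 1)) (1 + n + 1)"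
      unfolding partition_sum_append[OF u right] partition_sum_append[OF left t] partition_sum_single
      by simp
    also have "\<dots> \<le> M"
      by (rule M[OF is_partition_append[OF u right]])
    finally show ?thesis .
  qed
  then show ?thesis
    by (intro bdd_aboveI) blast
qed

lemma variation_ge:
  assumes "0 \<le> a" "b \<le> 1" "is_partition a b t n"
  shows "partition_sum f t n \<le> variation f a b"
  unfolding variation_def using assms bdd_above_partition_sums[OF assms(1,2)]
  by (intro cSup_upper) auto

lemma variation_approx:
  assumes "0 \<le> a" "a \<le> b" "b \<le> 1" "e > 0"
  obtains t n where "is_partition a b t n" "variation f a b - e < partition_sum f t n"
proof -
  let ?S = "{partition_sum f t n | t n. is_partition a b t n}"
  have "?S \<noteq> {}"
    using is_partition_single[OF assms(2)] by blast
  moreover have "variation f a b - e < Sup ?S"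
    unfolding variation_def using assms(4) by simp
  ultimately obtain p where "p \<in> ?S" "variation f a b - e < p"
    using less_cSup_iff[OF _ bdd_above_partition_sums[OF assms(1,3)]] by blast
  then show ?thesis using that by blast
qed

lemma abs_diff_le_variation:
  "0 \<le> a \<Longrightarrow> a \<le> b \<Longrightarrow> b \<le> 1 \<Longrightarrow> \<bar>f b - f a\<bar> \<le> variation f a b"
  using variation_ge[OF _ _ is_partition_single] partition_sum_single by metis

lemma variation_nonneg: "0 \<le> a \<Longrightarrow> a \<le> b \<Longrightarrow> b \<le> 1 \<Longrightarrow> 0 \<le> variation f a b"
  using abs_diff_le_variation by (meson abs_ge_zero order_trans)

lemma variation_add:
  assumes "0 \<le> a" "a \<le> b" "b \<le> c" "c \<le> 1"
  shows "variation f a c = variation f a b + variation f b c"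
proof (rule antisym)
  show "variation f a c \<le> variation f a b + variation f b c"
  proof (rule variation_least)
    fix t n assume t: "is_partition a c t n"
    have "partition_sum f t n \<le> partition_sum f (\<lambda>i. min b (t i)) n + partition_sum f (\<lambda>i. max b (t i)) n"
      by (rule partition_sum_le_split[OF t])
    also have "\<dots> \<le> variation f a b + variation f b c"
      using assms by (intro add_mono variation_ge is_partition_min[OF t] is_partition_max[OF t]) auto
    finally show "partition_sum f t n \<le> variation f a b + variation f b c" .
  qed (use assms in auto)
next
  have "variation f a b \<le> variation f a c - variation f b c"
  proof (rule variation_least)
    fix t n assume t: "is_partition a b t n"
    have "variation f b c \<le> variation f a c - partition_sum f t n"
    proof (rule variation_least)
      fix s m assume s: "is_partition b c s m"
      have "partition_sum f t n + partition_sum f s m \<le> variation f a c"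
        using variation_ge[OF _ _ is_partition_append[OF t s]] assms
        unfolding partition_sum_append[OF t s] by auto
      then show "partition_sum f s m \<le> variation f a c - partition_sum f t n" by simp
    qed (use assms in auto)
    then show "partition_sum f t n \<le> variation f a c - variation f b c" by simp
  qed (use assms in auto)
  then show "variation f a b + variation f b c \<le> variation f a c" by simp
qed


text \<open>Clamping a near-optimal partition of \<open>[a, c]\<close> at \<open>y\<close> moves each of its finitely many points
  by at most \<open>|y - a|\<close> (resp. \<open>|c - y|\<close>), so by uniform continuity the variation of \<open>[a, c]\<close> is almost
  all captured by \<open>[y, c]\<close> (resp. \<open>[a, y]\<close>).\<close>

lemma variation_small_right:
  assumes cont: "continuous_on {0..1} f" and "0 \<le> a" "a \<le> c" "c \<le> 1" "e > 0"
  obtains d where "d > 0" "\<And>y. a \<le> y \<Longrightarrow> y \<le> c \<Longrightarrow> y - a < d \<Longrightarrow> variation f a y < e"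
proof -
  obtain t n where t: "is_partition a c t n" "variation f a c - e / 2 < partition_sum f t n"
    using variation_approx[of a c "e / 2"] assms by auto
  obtain d where "d > 0" and d: "\<And>s. (\<And>i. i \<le> n \<Longrightarrow> s i \<in> {0..1} \<and> \<bar>s i - t i\<bar> < d) \<Longrightarrow>
      partition_sum f t n \<le> partition_sum f s n + e / 2"
    using partition_sum_le_near[OF cont t(1)] assms by (metis half_gt_zero)
  have "variation f a y < e" if y: "a \<le> y" "y \<le> c" "y - a < d" for y
  proof -
    have "partition_sum f t n \<le> partition_sum f (\<lambda>i. max y (t i)) n + e / 2"
    proof (rule d)
      fix i assume "i \<le> n"
      then show "max y (t i) \<in> {0..1} \<and> \<bar>max y (t i) - t i\<bar> < d"
        using is_partition_mem[OF t(1)] y assms by force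
    qed
    also have "partition_sum f (\<lambda>i. max y (t i)) n \<le> variation f y c"
      using assms y by (intro variation_ge is_partition_max[OF t(1)]) auto
    finally show ?thesis
      using t(2) variation_add[of a y c] assms y by linarith
  qed
  with \<open>d > 0\<close> show ?thesis using that by blast
qed

lemma variation_small_left:
  assumes cont: "continuous_on {0..1} f" and "0 \<le> a" "a \<le> c" "c \<le> 1" "e > 0"
  obtains d where "d > 0" "\<And>y. a \<le> y \<Longrightarrow> y \<le> c \<Longrightarrow> c - y < d \<Longrightarrow> variation f y c < e"
proof -
  obtain t n where t: "is_partition a c t n" "variation f a c - e / 2 < partition_sum f t n"
    using variation_approx[of a c "e / 2"] assms by auto
  obtain d where "d > 0" and d: "\<And>s. (\<And>i. i \<le> n \<Longrightarrow> s i \<in> {0..1} \<and> \<bar>s i - t i\<bar> < d) \<Longrightarrow>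
      partition_sum f t n \<le> partition_sum f s n + e / 2"
    using partition_sum_le_near[OF cont t(1)] assms by (metis half_gt_zero)
  have "variation f y c < e" if y: "a \<le> y" "y \<le> c" "c - y < d" for y
  proof -
    have "partition_sum f t n \<le> partition_sum f (\<lambda>i. min y (t i)) n + e / 2"
    proof (rule d)
      fix i assume "i \<le> n"
      then show "min y (t i) \<in> {0..1} \<and> \<bar>min y (t i) - t i\<bar> < d"
        using is_partition_mem[OF t(1)] y assms by force
    qed
    also have "partition_sum f (\<lambda>i. min y (t i)) n \<le> variation f a y"
      using assms y by (intro variation_ge is_partition_min[OF t(1)]) auto
    finally show ?thesis
      using t(2) variation_add[of a y c] assms y by linarith
  qed
  with \<open>d > 0\<close> show ?thesis using that by blast
qed

lemma continuous_on_variation: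
  assumes cont: "continuous_on {0..1} f"
  shows "continuous_on {0..1} (variation f 0)"
  unfolding continuous_on_iff
proof (intro ballI allI impI)
  fix x e :: real assume x: "x \<in> {0..1}" and "e > 0"
  obtain d1 where "d1 > 0" and d1: "\<And>y. 0 \<le> y \<Longrightarrow> y \<le> x \<Longrightarrow> x - y < d1 \<Longrightarrow> variation f y x < e"
    using variation_small_left[OF cont _ _ _ \<open>e > 0\<close>, of 0 x] x by auto
  obtain d2 where "d2 > 0" and d2: "\<And>y. x \<le> y \<Longrightarrow> y \<le> 1 \<Longrightarrow> y - x < d2 \<Longrightarrow> variation f x y < e"
    using variation_small_right[OF cont _ _ _ \<open>e > 0\<close>, of x 1] x by auto
  show "\<exists>d>0. \<forall>y\<in>{0..1}. dist y x < d \<longrightarrow> dist (variation f 0 y) (variation f 0 x) < e"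
  proof (intro exI[of _ "min d1 d2"] conjI ballI impI)
    fix y assume y: "y \<in> {0..1}" "dist y x < min d1 d2"
    show "dist (variation f 0 y) (variation f 0 x) < e"
    proof (cases "y \<le> x")
      case True
      then show ?thesis
        using variation_add[of 0 y x] d1[of y] variation_nonneg[of y x] x y
        by (auto simp: dist_real_def)
    next
      case False
      then show ?thesis
        using variation_add[of 0 x y] d2[of y] variation_nonneg[of x y] x y
        by (auto simp: dist_real_def)
    qed
  qed (use \<open>d1 > 0\<close> \<open>d2 > 0\<close> in auto)
qed

end

lemma abs_diff_le_variation_increment:
  assumes "bounded_variation01 f" "0 \<le> x" "x \<le> y" "y \<le> 1"
  shows "\<bar>f y - f x\<bar> \<le> variation f 0 y - variation f 0 x"
  using variation_add[OF assms(1), of 0 x y] abs_diff_le_variation[OF assms(1), of x y] assms by simp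

lemma jordan_decomposition:
  assumes "bounded_variation01 f" "continuous_on {0..1} f"
  obtains g h where "continuous_on {0..1} g" "continuous_on {0..1} h" "\<forall>x\<in>{0..1}. f x = g x + h x"
    "mono_on {0..1} g" "antimono_on {0..1} h"
proof
  let ?V = "variation f 0"
  have V: "continuous_on {0..1} ?V"
    by (rule continuous_on_variation[OF assms])
  show "continuous_on {0..1} (\<lambda>x. (?V x + f x) / 2)" "continuous_on {0..1} (\<lambda>x. (f x - ?V x) / 2)"
    by (intro continuous_intros V assms(2); simp)+
  show "\<forall>x\<in>{0..1}. f x = (?V x + f x) / 2 + (f x - ?V x) / 2"
    by (simp add: field_simps)
  have increment: "\<bar>f y - f x\<bar> \<le> ?V y - ?V x" if "x \<in> {0..1}" "y \<in> {0..1}" "x \<le> y" for x y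
    using abs_diff_le_variation_increment[OF assms(1)] that by simp
  show "mono_on {0..1} (\<lambda>x. (?V x + f x) / 2)"
    by (rule monotone_onI) (use increment in \<open>fastforce simp: abs_le_iff\<close>)
  show "antimono_on {0..1} (\<lambda>x. (f x - ?V x) / 2)"
    by (rule monotone_onI) (use increment in \<open>fastforce simp: abs_le_iff\<close>)
qed

lemma c_monotone_graph01_if_monotone:
  assumes "mono_on {0..1} g \<or> antimono_on {0..1} g"
  shows "c_monotone 1 (graph01 g)"
proof -
  define R where "R = {(p, q). p \<in> graph01 g \<and> q \<in> graph01 g \<and> fst p \<le> fst q}"
  have "linear_order_on (graph01 g) R"
    unfolding linear_order_on_def partial_order_on_def preorder_on_def refl_on_def trans_def
      antisym_def total_on_def R_def graph01_def
    by auto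
  moreover have "dist (x, g x) (y, g y) \<le> dist (x, g x) (z, g z)"
    if "x \<in> {0..1}" "y \<in> {0..1}" "z \<in> {0..1}" "x \<le> y" "y \<le> z" for x y z
  proof -
    have "g x \<le> g y \<and> g y \<le> g z \<or> g y \<le> g x \<and> g z \<le> g y"
      using assms monotone_onD[of "{0..1}" _ _ g x y] monotone_onD[of "{0..1}" _ _ g y z] that by blast
    then have "\<bar>g y - g x\<bar> \<le> \<bar>g z - g x\<bar>"
      by auto
    then have "(g y - g x)\<^sup>2 \<le> (g z - g x)\<^sup>2"
      by (simp add: abs_le_square_iff)
    moreover have "(y - x)\<^sup>2 \<le> (z - x)\<^sup>2"
      using that by (intro power_mono) auto
    ultimately show ?thesis
      by (simp add: dist_Pair_le_dist_Pair_iff)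
  qed
  ultimately show ?thesis
    unfolding c_monotone_def by (intro conjI exI[of _ R]) (auto simp: R_def graph01_def)
qed

lemma bounded_variation01_add:
  assumes "bounded_variation01 g" "bounded_variation01 h" "\<forall>x\<in>{0..1}. f x = g x + h x"
  shows "bounded_variation01 f"
proof -
  obtain Mg Mh where Mg: "\<And>t n. is_partition 0 1 t n \<Longrightarrow> partition_sum g t n \<le> Mg"
    and Mh: "\<And>t n. is_partition 0 1 t n \<Longrightarrow> partition_sum h t n \<le> Mh"
    using assms(1,2) unfolding bounded_variation01_iff by blast
  have "partition_sum f t n \<le> Mg + Mh" if t: "is_partition 0 1 t n" for t n
  proof -
    have "partition_sum f t n \<le> partition_sum g t n + partition_sum h t n"
      unfolding partition_sum_def sum.distrib[symmetric]
    proof (rule sum_mono)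
      fix i assume "i \<in> {..<n}"
      then have "f (t i) = g (t i) + h (t i)" "f (t (Suc i)) = g (t (Suc i)) + h (t (Suc i))"
        using assms(3) is_partition_mem[OF t, of i] is_partition_mem[OF t, of "Suc i"] by auto
      then show "\<bar>f (t (Suc i)) - f (t i)\<bar> \<le> \<bar>g (t (Suc i)) - g (t i)\<bar> + \<bar>h (t (Suc i)) - h (t i)\<bar>"
        by argo
    qed
    also have "\<dots> \<le> Mg + Mh"
      using Mg[OF t] Mh[OF t] by simp
    finally show ?thesis .
  qed
  then show ?thesis
    unfolding bounded_variation01_iff by blast
qed

lemma bounded_variation01_reflect:
  assumes "bounded_variation01 (\<lambda>x. g (1 - x))"
  shows "bounded_variation01 g"
proof -
  obtain M where M: "\<And>t n. is_partition 0 1 t n \<Longrightarrow> partition_sum (\<lambda>x. g (1 - x)) t n \<le> M"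
    using assms unfolding bounded_variation01_iff by blast
  have "partition_sum g t n \<le> M" if t: "is_partition 0 1 t n" for t n
  proof -
    let ?s = "\<lambda>i. 1 - t (n - i)"
    have "is_partition 0 1 ?s n"
      unfolding is_partition_def
    proof (intro conjI allI impI)
      fix i assume "i < n"
      then have "n - i = Suc (n - Suc i)" by simp
      then show "?s i \<le> ?s (Suc i)"
        using t \<open>i < n\<close> by (simp add: is_partition_def)
    qed (use t in \<open>simp_all add: is_partition_def\<close>)
    moreover have "partition_sum (\<lambda>x. g (1 - x)) ?s n = partition_sum g t n"
      unfolding partition_sum_def
      by (subst sum.nat_diff_reindex[symmetric]) (auto intro!: sum.cong simp: Suc_diff_Suc abs_minus_commute)
    ultimately show ?thesis
      using M by metis
  qed
  then show ?thesis
    unfolding bounded_variation01_iff by blast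
qed

lemma bounded_variation01_if_dist_nondecreasing:
  assumes cont: "continuous_on {0..1} g"
    and dist_mono: "\<And>r s u. 0 \<le> r \<Longrightarrow> r < s \<Longrightarrow> s < u \<Longrightarrow> u \<le> 1 \<Longrightarrow>
      dist (r, g r) (s, g s) \<le> dist (r, g r) (u, g u)"
  shows "bounded_variation01 g"
proof -
  obtain B where B: "\<forall>x\<in>{0..1}. \<bar>g x\<bar> \<le> B"
    using compact_imp_bounded[OF compact_continuous_image[OF cont compact_Icc]]
    unfolding bounded_iff by auto
  have "partition_sum g t n \<le> 5 + 8 * B" if t: "is_partition 0 1 t n" for t n
  proof -
    have "partition_sum g t n \<le> 5 * (t n - t 0) + 8 * B"
      unfolding partition_sum_def
    proof (rule sum_abs_diff_le_of_dist_nondecreasing)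
      show "t i \<le> t (Suc i)" if "i < n" for i
        using t that by (simp add: is_partition_def)
      show "\<bar>g (t i)\<bar> \<le> B" if "i \<le> n" for i
        using B is_partition_mem[OF t that] by simp
      show "dist (t k, g (t k)) (t i, g (t i)) \<le> dist (t k, g (t k)) (t (Suc i), g (t (Suc i)))"
        if "k \<le> i" "i < n" for k i
      proof -
        have "t k \<le> t i" "t i \<le> t (Suc i)"
          using is_partition_le[OF t] that by auto
        moreover have "t k \<in> {0..1}" "t (Suc i) \<in> {0..1}"
          using is_partition_mem[OF t] that by auto
        ultimately show ?thesis
          using dist_mono[of "t k" "t i" "t (Suc i)"] by (cases "t k = t i \<or> t i = t (Suc i)") auto
      qed
    qed
    then show ?thesis
      using t by (simp add: is_partition_def)
  qed
  then show ?thesis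
    unfolding bounded_variation01_iff by blast
qed

lemma monotone_arc_order_graph01:
  assumes "continuous_on {0..1} g" "c_monotone c (graph01 g)"
  obtains P where "monotone_arc_order (\<lambda>x. (x, g x)) P c"
proof -
  obtain R where R: "linear_order_on (graph01 g) R" and c: "c > 0"
    and mono: "\<And>p q r. p \<in> graph01 g \<Longrightarrow> q \<in> graph01 g \<Longrightarrow> r \<in> graph01 g \<Longrightarrow>
      (p, q) \<in> R \<Longrightarrow> p \<noteq> q \<Longrightarrow> (q, r) \<in> R \<Longrightarrow> q \<noteq> r \<Longrightarrow> dist p q \<le> c * dist p r"
    using assms(2) unfolding c_monotone_def by blast
  have graph: "(x, g x) \<in> graph01 g" if "x \<in> {0..1}" for x
    using that unfolding graph01_def by auto
  have "monotone_arc_order (\<lambda>x. (x, g x)) (\<lambda>s t. ((s, g s), (t, g t)) \<in> R) c"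
  proof
    show "continuous_on {0..1} (\<lambda>x. (x, g x))"
      by (intro continuous_intros assms(1))
    show "inj_on (\<lambda>x. (x, g x)) {0..1}"
      by (auto intro: inj_onI)
    show "((s, g s), (t, g t)) \<in> R \<longleftrightarrow> ((t, g t), (s, g s)) \<notin> R"
      if "s \<in> {0..1}" "t \<in> {0..1}" "s \<noteq> t" for s t
      using R graph[OF that(1)] graph[OF that(2)] that(3)
      unfolding linear_order_on_def partial_order_on_def antisym_def total_on_def by blast
  qed (use c mono graph in auto)
  then show ?thesis using that by blast
qed

lemma bounded_variation01_if_c_monotone_graph01:
  assumes cont: "continuous_on {0..1} g" and "c_monotone 1 (graph01 g)"
  shows "bounded_variation01 g"
proof -
  obtain P where P: "monotone_arc_order (\<lambda>x. (x, g x)) P 1"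
    using monotone_arc_order_graph01[OF assms] by blast
  have dist_mono: "dist (r, g r) (s, g s) \<le> dist (r, g r) (u, g u)"
    if "r \<in> {0..1}" "s \<in> {0..1}" "u \<in> {0..1}" "r \<noteq> s" "s \<noteq> u" "P r s" "P s u" for r s u
    using monotone_arc_order.monotone[OF P that] by simp
  from monotone_arc_order.natural_or_reverse[OF P] show ?thesis
  proof
    assume "\<forall>s t. 0 \<le> s \<longrightarrow> s < t \<longrightarrow> t \<le> 1 \<longrightarrow> P s t"
    then show ?thesis
      using dist_mono by (intro bounded_variation01_if_dist_nondecreasing[OF cont]) auto
  next
    assume reverse: "\<forall>s t. 0 \<le> s \<longrightarrow> s < t \<longrightarrow> t \<le> 1 \<longrightarrow> P t s"
    have "bounded_variation01 (\<lambda>x. g (1 - x))"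
    proof (rule bounded_variation01_if_dist_nondecreasing)
      show "continuous_on {0..1} (\<lambda>x. g (1 - x))"
        by (rule continuous_on_compose2[OF cont]) (auto intro!: continuous_intros)
      fix r s u :: real assume "0 \<le> r" "r < s" "s < u" "u \<le> 1"
      then have "dist (1 - r, g (1 - r)) (1 - s, g (1 - s)) \<le> dist (1 - r, g (1 - r)) (1 - u, g (1 - u))"
        using reverse by (intro dist_mono) auto
      then show "dist (r, g (1 - r)) (s, g (1 - s)) \<le> dist (r, g (1 - r)) (u, g (1 - u))"
        by (simp add: dist_Pair_le_dist_Pair_iff power2_commute)
    qed
    then show ?thesis
      by (rule bounded_variation01_reflect)
  qed
qed

theorem corollary6p6:
  fixes f :: "real \<Rightarrow> real"
  assumes "continuous_on {0..1} f"
  shows "bounded_variation01 f \<longleftrightarrow>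
    (\<exists>g h. continuous_on {0..1} g \<and> continuous_on {0..1} h \<and>
       (\<forall>x\<in>{0..1}. f x = g x + h x) \<and>
       c_monotone 1 (graph01 g) \<and> c_monotone 1 (graph01 h))"
proof
  assume "bounded_variation01 f"
  then obtain g h where "continuous_on {0..1} g" "continuous_on {0..1} h" "\<forall>x\<in>{0..1}. f x = g x + h x"
    "mono_on {0..1} g" "antimono_on {0..1} h"
    using jordan_decomposition assms by blast
  then show "\<exists>g h. continuous_on {0..1} g \<and> continuous_on {0..1} h \<and> (\<forall>x\<in>{0..1}. f x = g x + h x) \<and>
      c_monotone 1 (graph01 g) \<and> c_monotone 1 (graph01 h)"
    using c_monotone_graph01_if_monotone by blast
next
  assume "\<exists>g h. continuous_on {0..1} g \<and> continuous_on {0..1} h \<and> (\<forall>x\<in>{0..1}. f x = g x + h x) \<and>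
      c_monotone 1 (graph01 g) \<and> c_monotone 1 (graph01 h)"
  then show "bounded_variation01 f"
    using bounded_variation01_add bounded_variation01_if_c_monotone_graph01 by blast
qed

end
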